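(* In the setting described in the context (with any one of the three learning-rate setups (a), (b), (c)), there exist a deterministic constant $C$ and an integer $m_0$ such that for all $m\ge m_0$, $$\|z_{2,m}\|_m\le T_m\,C\,\big(\|w_{t_m}-w_*\|_m+1\big).$$
   Context: Setting. $\{Y_t\}_{t\ge0}$ is a Markov chain on a measurable space $\mathcal{Y}$ with transition kernel $P$ and unique stationary distribution $d_{\mathcal{Y}}$, with $\int|P^n(y,y')-d_{\mathcal{Y}}(y')|\,\mathrm{d}y'\le C_A\varrho^n$ for all $y,n$, some $\varrho\in[0,1)$. $H:\mathbb{R}^d\times\mathcal{Y}\to\mathbb{R}^d$, $h(w)=\mathbb{E}_{y\sim d_{\mathcal{Y}}}[H(w,y)]$; for some norm $\|\cdot\|$ and $\kappa\in[0,1)$, $\|h(w)-h(w')\|\le\kappa\|w-w'\|$, with fixed point $w_*$; $\|H(w,y)-H(w',y)\|\le L_h\|w-w'\|$ for all $w,w',y$ and $\sup_y\|H(0,y)\|<\infty$. Iterates: $w_0\in\mathbb{R}^d$, $w_{t+1}=w_t+\alpha_t(H(w_t,Y_{t+1})-w_t)$. Put $G(w,y)=H(w,y)-w$. Learning-rate setups with $C_\alpha>0$: (a) $\alpha_t=\frac{C_\alpha}{t+3}$, $T_m=\frac{C_\alpha\ln^{\nu_1}(m+3)}{m+3}$, $\nu_1\in(0,1)$; (b) $\alpha_t=\frac{C_\alpha}{(t+3)^\nu}$, $\nu\in(\frac23,1)$, $T_m=\frac{C_\alpha}{(m+3)^{\nu_2}}$, $\frac12<\nu_2<\frac\nu{2-\nu}$;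 (c) $\alpha_t=\frac{C_\alpha}{(t+3)\ln^\nu(t+3)}$, $\nu\in(0,1)$, $T_m=\frac{C_\alpha}{m+3}$. Anchors: $t_0=0$, $t_{m+1}=\min\{k:\sum_{t=t_m}^{k-1}\alpha_t\ge T_m\}$. Filtration $\mathcal{F}_t=\sigma(w_0,Y_1,\dots,Y_t)$, $\mathbb{E}_m[\cdot]=\mathbb{E}[\cdot\mid\mathcal{F}_{t_m}]$. Define $z_{2,m}=\sum_{t=t_m}^{t_{m+1}-1}\alpha_t\big(G(w_{t_m},Y_{t+1})-\mathbb{E}_m[G(w_{t_m},Y_{t+1})]\big)$. The norm $\|\cdot\|_m$: fix a norm $\|\cdot\|_s$ such that $\frac12\|\cdot\|_s^2$ is smooth w.r.t. $\|\cdot\|_s$ and $\xi>0$; $\|\cdot\|_m$ is the norm with $\frac12\|w\|_m^2=\inf_u\{\frac12\|u\|^2+\frac1{2\xi}\|w-u\|_s^2\}$. *)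

theory Defs
  imports "HOL-Probability.Probability"
begin

definition is_norm :: "(real^'d \<Rightarrow> real) \<Rightarrow> bool" where
  "is_norm N \<longleftrightarrow> (\<forall>x. N x \<ge> 0) \<and> (\<forall>x. N x = 0 \<longleftrightarrow> x = 0)
     \<and> (\<forall>c x. N (c *\<^sub>R x) = \<bar>c\<bar> * N x) \<and> (\<forall>x y. N (x + y) \<le> N x + N y)"

text \<open>f is L-smooth w.r.t. the norm N: f is differentiable and its gradient is
  L-Lipschitz from (R^d, N) to the dual space (dual norm written out pointwise).\<close>
definition smooth_wrt :: "(real^'d \<Rightarrow> real) \<Rightarrow> (real^'d \<Rightarrow> real) \<Rightarrow> bool" where
  "smooth_wrt f N \<longleftrightarrow> (\<exists>L f'. (\<forall>x. (f has_derivative f' x) (at x)) \<and>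
     (\<forall>x y u. \<bar>f' x u - f' y u\<bar> \<le> L * N (x - y) * N u))"

definition moreau_norm :: "(real^'d \<Rightarrow> real) \<Rightarrow> (real^'d \<Rightarrow> real) \<Rightarrow> real \<Rightarrow> real^'d \<Rightarrow> real" where
  "moreau_norm N Ns \<xi> w =
     sqrt (2 * (INF u. (1/2) * (N u)\<^sup>2 + (1 / (2 * \<xi>)) * (Ns (w - u))\<^sup>2))"

primrec kernel_pow :: "'y measure \<Rightarrow> ('y \<Rightarrow> 'y measure) \<Rightarrow> nat \<Rightarrow> 'y \<Rightarrow> 'y measure" where
  "kernel_pow S P 0 y = return S y"
| "kernel_pow S P (Suc n) y = bind (kernel_pow S P n y) P"

definition gen_sigma :: "'a measure \<Rightarrow> 'y measure \<Rightarrow> (nat \<Rightarrow> 'a \<Rightarrow> 'y) \<Rightarrow> nat set \<Rightarrow> 'a measure" where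
  "gen_sigma M S Y I = sigma (space M) {Y s -` A \<inter> space M | s A. s \<in> I \<and> A \<in> sets S}"

definition markov_chain :: "'a measure \<Rightarrow> 'y measure \<Rightarrow> (nat \<Rightarrow> 'a \<Rightarrow> 'y) \<Rightarrow> ('y \<Rightarrow> 'y measure) \<Rightarrow> bool" where
  "markov_chain M S Y P \<longleftrightarrow> prob_space M \<and> P \<in> S \<rightarrow>\<^sub>M prob_algebra S \<and>
     (\<forall>t. Y t \<in> M \<rightarrow>\<^sub>M S) \<and>
     (\<forall>t. \<forall>A \<in> sets S. AE \<omega> in M.
        real_cond_exp M (gen_sigma M S Y {..t}) (indicator (Y (Suc t) -` A \<inter> space M)) \<omega>
          = measure (P (Y t \<omega>)) A)"

definition stationary :: "'y measure \<Rightarrow> ('y \<Rightarrow> 'y measure) \<Rightarrow> 'y measure \<Rightarrow> bool" where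
  "stationary S P \<mu> \<longleftrightarrow> prob_space \<mu> \<and> sets \<mu> = sets S \<and> bind \<mu> P = \<mu>"

definition cond_exp_vec :: "'a measure \<Rightarrow> 'a measure \<Rightarrow> ('a \<Rightarrow> real^'d) \<Rightarrow> 'a \<Rightarrow> real^'d" where
  "cond_exp_vec M F X \<omega> = (\<chi> i. real_cond_exp M F (\<lambda>\<omega>'. X \<omega>' $ i) \<omega>)"

primrec iterate :: "(real^'d \<Rightarrow> 'y \<Rightarrow> real^'d) \<Rightarrow> (nat \<Rightarrow> real) \<Rightarrow> (nat \<Rightarrow> 'a \<Rightarrow> 'y) \<Rightarrow> real^'d
                    \<Rightarrow> nat \<Rightarrow> 'a \<Rightarrow> real^'d" where
  "iterate H \<alpha> Y w0 0 \<omega> = w0"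
| "iterate H \<alpha> Y w0 (Suc t) \<omega> =
     iterate H \<alpha> Y w0 t \<omega> + \<alpha> t *\<^sub>R (H (iterate H \<alpha> Y w0 t \<omega>) (Y (Suc t) \<omega>) - iterate H \<alpha> Y w0 t \<omega>)"

primrec anchor :: "(nat \<Rightarrow> real) \<Rightarrow> (nat \<Rightarrow> real) \<Rightarrow> nat \<Rightarrow> nat" where
  "anchor \<alpha> T 0 = 0"
| "anchor \<alpha> T (Suc m) = (LEAST k. (\<Sum>t\<in>{anchor \<alpha> T m..<k}. \<alpha> t) \<ge> T m)"

text \<open>Filtration F_t = sigma(w_0, Y_1, ..., Y_t); w_0 is deterministic.\<close>
definition filt :: "'a measure \<Rightarrow> 'y measure \<Rightarrow> (nat \<Rightarrow> 'a \<Rightarrow> 'y) \<Rightarrow> nat \<Rightarrow> 'a measure" where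
  "filt M S Y t = gen_sigma M S Y {1..t}"

definition z2 :: "'a measure \<Rightarrow> 'y measure \<Rightarrow> (real^'d \<Rightarrow> 'y \<Rightarrow> real^'d) \<Rightarrow> (nat \<Rightarrow> real) \<Rightarrow> (nat \<Rightarrow> real)
                  \<Rightarrow> (nat \<Rightarrow> 'a \<Rightarrow> 'y) \<Rightarrow> real^'d \<Rightarrow> nat \<Rightarrow> 'a \<Rightarrow> real^'d" where
  "z2 M S H \<alpha> T Y w0 m \<omega> =
     (let G = (\<lambda>w y. H w y - w);
          tm = anchor \<alpha> T m;
          wm = iterate H \<alpha> Y w0 tm
      in (\<Sum>t\<in>{tm..<anchor \<alpha> T (Suc m)}.
            \<alpha> t *\<^sub>R (G (wm \<omega>) (Y (Suc t) \<omega>)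
                     - cond_exp_vec M (filt M S Y tm) (\<lambda>\<omega>'. G (wm \<omega>') (Y (Suc t) \<omega>')) \<omega>)))"

definition lr_setup :: "real \<Rightarrow> (nat \<Rightarrow> real) \<Rightarrow> (nat \<Rightarrow> real) \<Rightarrow> bool" where
  "lr_setup C\<alpha> \<alpha> T \<longleftrightarrow>
     (\<exists>\<nu>1. 0 < \<nu>1 \<and> \<nu>1 < 1 \<and>
        \<alpha> = (\<lambda>t. C\<alpha> / (real t + 3)) \<and>
        T = (\<lambda>m. C\<alpha> * (ln (real m + 3)) powr \<nu>1 / (real m + 3)))
   \<or> (\<exists>\<nu> \<nu>2. 2/3 < \<nu> \<and> \<nu> < 1 \<and> 1/2 < \<nu>2 \<and> \<nu>2 < \<nu> / (2 - \<nu>) \<and>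
        \<alpha> = (\<lambda>t. C\<alpha> / (real t + 3) powr \<nu>) \<and>
        T = (\<lambda>m. C\<alpha> / (real m + 3) powr \<nu>2))
   \<or> (\<exists>\<nu>. 0 < \<nu> \<and> \<nu> < 1 \<and>
        \<alpha> = (\<lambda>t. C\<alpha> / ((real t + 3) * (ln (real t + 3)) powr \<nu>)) \<and>
        T = (\<lambda>m. C\<alpha> / (real m + 3)))"

end

theory Submission
  imports Defs
begin

(*
  The bound is pathwise; no mixing is needed. Every summand G(w_{t_m}, Y_{t+1}) of z_{2,m} is
  dominated in norm by Z = (L + 1) ||w_{t_m}|| + B, where B bounds ||H(0, y)||. Since w_{t_m}
  is a measurable function of Y_1, ..., Y_{t_m} (H is Lipschitz in w and measurable in y),
  Z is F_{t_m}-measurable, so conditional expectation preserves this bound up to a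
  norm-equivalence constant. Hence ||z_{2,m}|| <= C Z (sum of alpha_t over the block), and the
  block sum is at most T_m + alpha_{t_{m+1}-1} <= 2 T_m by minimality of t_{m+1}. Finally
  ||.||_m <= ||.|| and ||.|| <= c^{-1} ||.||_m turn Z into a multiple of ||w_{t_m} - w_*||_m + 1.
*)

section \<open>Norms and the Moreau envelope norm\<close>

lemma is_norm_nonneg: "is_norm N \<Longrightarrow> 0 \<le> N x"
  unfolding is_norm_def by blast

lemma is_norm_eq_0_iff: "is_norm N \<Longrightarrow> N x = 0 \<longleftrightarrow> x = 0"
  unfolding is_norm_def by blast

lemma is_norm_zero: "is_norm N \<Longrightarrow> N 0 = 0"
  by (simp add: is_norm_eq_0_iff)

lemma is_norm_scaleR: "is_norm N \<Longrightarrow> N (c *\<^sub>R x) = \<bar>c\<bar> * N x"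
  unfolding is_norm_def by blast

lemma is_norm_triangle: "is_norm N \<Longrightarrow> N (x + y) \<le> N x + N y"
  unfolding is_norm_def by blast

lemma is_norm_minus: "is_norm N \<Longrightarrow> N (- x) = N x"
  using is_norm_scaleR[of N "-1" x] by simp

lemma is_norm_diff_le: "is_norm N \<Longrightarrow> N (x - y) \<le> N x + N y"
  using is_norm_triangle[of N x "- y"] is_norm_minus[of N y] by simp

lemma is_norm_triangle_sub: "is_norm N \<Longrightarrow> N x \<le> N (x - y) + N y"
  using is_norm_triangle[of N "x - y" y] by simp

lemma is_norm_sum_le:
  assumes "is_norm N"
  shows "N (sum f A) \<le> (\<Sum>a\<in>A. N (f a))"
proof (induction A rule: infinite_finite_induct)
  case (insert x F)
  then show ?case using is_norm_triangle[OF assms, of "f x" "sum f F"] by simp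
qed (simp_all add: is_norm_zero[OF assms])

lemma is_norm_le_norm:
  fixes N :: "real^'d \<Rightarrow> real"
  assumes "is_norm N"
  obtains K where "0 \<le> K" "\<And>x. N x \<le> K * norm x"
proof
  show "0 \<le> (\<Sum>b\<in>Basis. N b)" by (simp add: sum_nonneg is_norm_nonneg[OF assms])
  fix x :: "real^'d"
  have "N x = N (\<Sum>b\<in>Basis. (x \<bullet> b) *\<^sub>R b)" by (simp add: euclidean_representation)
  also have "\<dots> \<le> (\<Sum>b\<in>Basis. N ((x \<bullet> b) *\<^sub>R b))" by (rule is_norm_sum_le[OF assms])
  also have "\<dots> = (\<Sum>b\<in>Basis. \<bar>x \<bullet> b\<bar> * N b)" by (simp add: is_norm_scaleR[OF assms])
  also have "\<dots> \<le> (\<Sum>b\<in>Basis. norm x * N b)"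
    by (intro sum_mono mult_right_mono) (auto simp: Basis_le_norm is_norm_nonneg[OF assms])
  finally show "N x \<le> (\<Sum>b\<in>Basis. N b) * norm x" by (simp add: sum_distrib_left mult.commute)
qed

lemma is_norm_lipschitz:
  fixes N :: "real^'d \<Rightarrow> real"
  assumes "is_norm N"
  obtains K where "lipschitz_on K UNIV N"
proof -
  obtain K where K: "0 \<le> K" "\<And>x. N x \<le> K * norm x" using is_norm_le_norm[OF assms] by blast
  have "lipschitz_on K UNIV N"
  proof (rule lipschitz_onI)
    fix x y :: "real^'d"
    have "N x - N y \<le> K * dist x y" "N y - N x \<le> K * dist x y"
      using is_norm_triangle_sub[OF assms, of x y] is_norm_triangle_sub[OF assms, of y x]
        K(2)[of "x - y"] K(2)[of "y - x"] by (auto simp: dist_norm norm_minus_commute)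
    then show "dist (N x) (N y) \<le> K * dist x y" by (simp add: dist_real_def abs_le_iff)
  qed (use K in auto)
  then show thesis ..
qed

lemma is_norm_continuous_on: "is_norm N \<Longrightarrow> continuous_on UNIV N"
  by (metis is_norm_lipschitz lipschitz_on_continuous_on)

lemma is_norm_ge_norm:
  fixes N :: "real^'d \<Rightarrow> real"
  assumes N: "is_norm N"
  obtains c where "0 < c" "\<And>x. c * norm x \<le> N x"
proof -
  obtain b :: "real^'d" where "b \<in> Basis" using nonempty_Basis by blast
  then have "sphere 0 1 \<noteq> ({} :: (real^'d) set)" by force
  then obtain x0 where x0: "x0 \<in> sphere 0 1" "\<And>y. y \<in> sphere 0 1 \<Longrightarrow> N x0 \<le> N y"
    using continuous_attains_inf[OF compact_sphere _
        continuous_on_subset[OF is_norm_continuous_on[OF N]]]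
    by blast
  have "0 < N x0"
    using x0(1) is_norm_eq_0_iff[OF N, of x0] is_norm_nonneg[OF N, of x0] by fastforce
  moreover have "N x0 * norm x \<le> N x" for x
  proof (cases "x = 0")
    case False
    then have "N x0 \<le> N ((1 / norm x) *\<^sub>R x)" by (intro x0(2)) simp
    then show ?thesis using False by (simp add: is_norm_scaleR[OF N] field_simps)
  qed (simp add: is_norm_zero[OF N])
  ultimately show thesis ..
qed

lemma is_norm_equivalent:
  assumes "is_norm N" "is_norm N'"
  obtains c where "0 < c" "\<And>x. c * N x \<le> N' x"
proof -
  obtain K where K: "0 \<le> K" "\<And>x. N x \<le> K * norm x" using is_norm_le_norm[OF assms(1)] by blast
  obtain c where c: "0 < c" "\<And>x. c * norm x \<le> N' x" using is_norm_ge_norm[OF assms(2)] by blast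
  show thesis
  proof
    show "0 < c / (K + 1)" using K c by simp
    fix x
    have "N x \<le> (K + 1) * norm x"
      using K(2)[of x] norm_ge_zero[of x] unfolding distrib_right by linarith
    then have "c / (K + 1) * N x \<le> c / (K + 1) * ((K + 1) * norm x)"
      using c(1) K(1) by (intro mult_left_mono) auto
    also have "\<dots> = c * norm x" using K(1) by simp
    finally show "c / (K + 1) * N x \<le> N' x" using c(2)[of x] by linarith
  qed
qed

lemma is_norm_lipschitz_continuous_on:
  assumes N: "is_norm N" and f: "\<And>w w'. N (f w - f w') \<le> L * N (w - w')"
  shows "continuous_on UNIV f"
proof -
  obtain K where K: "0 \<le> K" "\<And>x. N x \<le> K * norm x" using is_norm_le_norm[OF N] by blast
  obtain c where c: "0 < c" "\<And>x. c * norm x \<le> N x" using is_norm_ge_norm[OF N] by blast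
  have "dist (f w) (f w') \<le> \<bar>L\<bar> * K / c * dist w w'" for w w'
  proof -
    have "c * norm (f w - f w') \<le> L * N (w - w')" using c(2) f order_trans by blast
    also have "\<dots> \<le> \<bar>L\<bar> * N (w - w')" by (simp add: mult_right_mono is_norm_nonneg[OF N])
    also have "\<dots> \<le> \<bar>L\<bar> * (K * norm (w - w'))" by (simp add: mult_left_mono K(2))
    finally have "c * norm (f w - f w') \<le> \<bar>L\<bar> * (K * norm (w - w'))" .
    then show ?thesis using c(1) by (simp add: dist_norm field_simps)
  qed
  then have "lipschitz_on (\<bar>L\<bar> * K / c) UNIV f"
    by (intro lipschitz_onI) (use K c in auto)
  then show ?thesis by (rule lipschitz_on_continuous_on)
qed

lemma moreau_norm_le:
  assumes "is_norm N" "is_norm Ns" "0 < \<xi>"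
  shows "moreau_norm N Ns \<xi> w \<le> N w"
proof -
  let ?f = "\<lambda>u. (1/2) * (N u)\<^sup>2 + (1 / (2 * \<xi>)) * (Ns (w - u))\<^sup>2"
  have "(INF u. ?f u) \<le> ?f w"
    by (rule cINF_lower)
      (auto intro!: bdd_belowI[of _ 0] add_nonneg_nonneg mult_nonneg_nonneg simp: assms(3) less_imp_le)
  also have "\<dots> = (1/2) * (N w)\<^sup>2" by (simp add: is_norm_zero[OF assms(2)])
  finally have "sqrt (2 * (INF u. ?f u)) \<le> sqrt ((N w)\<^sup>2)" by (intro real_sqrt_le_mono) simp
  then show ?thesis unfolding moreau_norm_def by (simp add: is_norm_nonneg[OF assms(1)])
qed

lemma moreau_norm_ge:
  fixes N Ns :: "real^'d \<Rightarrow> real"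
  assumes N: "is_norm N" and Ns: "is_norm Ns" and \<xi>: "0 < \<xi>"
  obtains c where "0 < c" "\<And>w. c * N w \<le> moreau_norm N Ns \<xi> w"
proof -
  obtain b where b: "0 < b" "\<And>x. b * N x \<le> Ns x" using is_norm_equivalent[OF N Ns] by blast
  define \<mu> where "\<mu> = min 1 (b\<^sup>2 / \<xi>)"
  have \<mu>: "0 < \<mu>" "\<mu> \<le> 1" "\<mu> \<le> b\<^sup>2 / \<xi>" using b(1) \<xi> by (auto simp: \<mu>_def)
  have lower: "\<mu> / 4 * (N w)\<^sup>2 \<le> (1/2) * (N u)\<^sup>2 + (1 / (2 * \<xi>)) * (Ns (w - u))\<^sup>2" for w u
  proof -
    have "N w \<le> N u + N (w - u)" using is_norm_triangle[OF N, of u "w - u"] by simp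
    then have "(N w)\<^sup>2 \<le> (N u + N (w - u))\<^sup>2" by (simp add: power_mono is_norm_nonneg[OF N])
    also have "\<dots> \<le> 2 * ((N u)\<^sup>2 + (N (w - u))\<^sup>2)"
      using sum_squares_ge_zero[of "N u - N (w - u)" 0] by (simp add: power2_eq_square algebra_simps)
    finally have sq: "(N w)\<^sup>2 \<le> 2 * ((N u)\<^sup>2 + (N (w - u))\<^sup>2)" .
    have "\<mu> * (N (w - u))\<^sup>2 \<le> b\<^sup>2 / \<xi> * (N (w - u))\<^sup>2" using \<mu>(3) by (intro mult_right_mono) auto
    also have "\<dots> = (b * N (w - u))\<^sup>2 / \<xi>" by (simp add: power_mult_distrib)
    also have "\<dots> \<le> (Ns (w - u))\<^sup>2 / \<xi>"
      using b \<xi> by (intro divide_right_mono power_mono) (auto simp: is_norm_nonneg[OF N])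
    finally have "\<mu> * (N (w - u))\<^sup>2 \<le> (Ns (w - u))\<^sup>2 / \<xi>" .
    moreover have "\<mu> * (N u)\<^sup>2 \<le> (N u)\<^sup>2" using \<mu>(1,2) by (intro mult_left_le_one_le) auto
    ultimately show ?thesis using mult_left_mono[OF sq, of "\<mu> / 4"] \<mu>(1) by (simp add: field_simps)
  qed
  show thesis
  proof
    show "0 < sqrt (\<mu> / 2)" using \<mu>(1) by simp
    fix w
    have "\<mu> / 4 * (N w)\<^sup>2 \<le> (INF u. (1/2) * (N u)\<^sup>2 + (1 / (2 * \<xi>)) * (Ns (w - u))\<^sup>2)"
      by (rule cINF_greatest) (use lower in simp_all)
    then have "sqrt (\<mu> / 2 * (N w)\<^sup>2) \<le> moreau_norm N Ns \<xi> w"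
      unfolding moreau_norm_def by (intro real_sqrt_le_mono) simp
    moreover have "sqrt (\<mu> / 2 * (N w)\<^sup>2) = sqrt (\<mu> / 2) * N w"
      by (simp only: real_sqrt_mult real_sqrt_abs) (simp add: is_norm_nonneg[OF N])
    ultimately show "sqrt (\<mu> / 2) * N w \<le> moreau_norm N Ns \<xi> w" by simp
  qed
qed

lemma affine_le_moreau_norm_diff:
  fixes N Ns :: "real^'d \<Rightarrow> real"
  assumes N: "is_norm N" and Ns: "is_norm Ns" and \<xi>: "0 < \<xi>" and "0 \<le> a"
  obtains D where "\<And>w. a * N w + b \<le> D * (moreau_norm N Ns \<xi> (w - v) + 1)"
proof -
  obtain c where c: "0 < c" "\<And>w. c * N w \<le> moreau_norm N Ns \<xi> w"
    using moreau_norm_ge[OF N Ns \<xi>] by blast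
  define D where "D = max (a / c) (a * N v + b)"
  have "a * N w + b \<le> D * (moreau_norm N Ns \<xi> (w - v) + 1)" for w
  proof -
    let ?\<mu> = "moreau_norm N Ns \<xi> (w - v)"
    have "0 \<le> ?\<mu>"
      using c is_norm_nonneg[OF N, of "w - v"] by (meson mult_nonneg_nonneg less_imp_le order_trans)
    have "N w \<le> N (w - v) + N v" by (rule is_norm_triangle_sub[OF N])
    also have "N (w - v) \<le> ?\<mu> / c" using c by (simp add: pos_le_divide_eq mult.commute)
    finally have "a * N w + b \<le> a / c * ?\<mu> + (a * N v + b)"
      using \<open>0 \<le> a\<close> by (auto dest: mult_left_mono[of _ _ a] simp: distrib_left)
    also have "\<dots> \<le> D * ?\<mu> + D"
      unfolding D_def using \<open>0 \<le> ?\<mu>\<close> by (intro add_mono mult_right_mono) auto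
    finally show ?thesis by (simp add: distrib_left)
  qed
  then show thesis by (rule that)
qed

lemma lipschitz_affine_growth:
  fixes H :: "real^'d \<Rightarrow> 'y \<Rightarrow> real^'d"
  assumes N: "is_norm N" and lip: "\<And>w w' y. y \<in> space S \<Longrightarrow> N (H w y - H w' y) \<le> L * N (w - w')"
    and bdd: "\<exists>B. \<forall>y\<in>space S. N (H 0 y) \<le> B"
  obtains B where "0 \<le> B" "\<And>w y. y \<in> space S \<Longrightarrow> N (H w y - w) \<le> (\<bar>L\<bar> + 1) * N w + B"
proof -
  obtain B where B: "\<And>y. y \<in> space S \<Longrightarrow> N (H 0 y) \<le> B" using bdd by blast
  have "N (H w y - w) \<le> (\<bar>L\<bar> + 1) * N w + max B 0" if y: "y \<in> space S" for w y
  proof -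
    have "N (H w y - w) \<le> N (H w y - H 0 y) + N (H 0 y - w)"
      using is_norm_triangle[OF N, of "H w y - H 0 y" "H 0 y - w"] by simp
    also have "\<dots> \<le> \<bar>L\<bar> * N w + (N (H 0 y) + N w)"
    proof (rule add_mono)
      have "N (H w y - H 0 y) \<le> L * N w" using lip[OF y, of w 0] by simp
      then show "N (H w y - H 0 y) \<le> \<bar>L\<bar> * N w"
        using is_norm_nonneg[OF N, of w] by (meson abs_ge_self mult_right_mono order_trans)
    qed (rule is_norm_diff_le[OF N])
    finally show ?thesis using B[OF y] by (simp add: distrib_right)
  qed
  then show thesis by (intro that[of "max B 0"]) auto
qed

section \<open>Step sizes and anchor times\<close>

lemma one_le_ln_of_ge_3: "3 \<le> x \<Longrightarrow> 1 \<le> ln (x::real)"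
  using exp_le ln_ge_iff[of x 1] by auto

lemma lr_setup_le_horizon:
  assumes lr: "lr_setup C\<alpha> \<alpha> T" and C\<alpha>: "0 < C\<alpha>" and "m \<le> t"
  shows "\<alpha> t \<le> T m"
  using lr unfolding lr_setup_def
proof (elim disjE exE conjE)
  fix \<nu>1 :: real assume "0 < \<nu>1" and \<alpha>: "\<alpha> = (\<lambda>t. C\<alpha> / (real t + 3))"
    and T: "T = (\<lambda>m. C\<alpha> * ln (real m + 3) powr \<nu>1 / (real m + 3))"
  have "1 \<le> ln (real m + 3) powr \<nu>1"
    using one_le_ln_of_ge_3[of "real m + 3"] \<open>0 < \<nu>1\<close> by (intro ge_one_powr_ge_zero) auto
  then have "C\<alpha> / (real m + 3) \<le> C\<alpha> * ln (real m + 3) powr \<nu>1 / (real m + 3)"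
    using C\<alpha> by (intro divide_right_mono) auto
  moreover have "C\<alpha> / (real t + 3) \<le> C\<alpha> / (real m + 3)"
    using \<open>m \<le> t\<close> C\<alpha> by (intro divide_left_mono) auto
  ultimately show ?thesis using \<alpha> T by simp
next
  fix \<nu> \<nu>2 :: real assume \<nu>: "2/3 < \<nu>" "\<nu> < 1" "\<nu>2 < \<nu> / (2 - \<nu>)"
    and \<alpha>: "\<alpha> = (\<lambda>t. C\<alpha> / (real t + 3) powr \<nu>)" and T: "T = (\<lambda>m. C\<alpha> / (real m + 3) powr \<nu>2)"
  have "\<nu> / (2 - \<nu>) \<le> \<nu>" using \<nu> by (simp add: field_simps)
  then have "(real m + 3) powr \<nu>2 \<le> (real m + 3) powr \<nu>" using \<nu> by (intro powr_mono) auto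
  also have "\<dots> \<le> (real t + 3) powr \<nu>" using \<open>m \<le> t\<close> \<nu> by (intro powr_mono2) auto
  finally show ?thesis using \<alpha> T C\<alpha> by (auto intro: divide_left_mono)
next
  fix \<nu> :: real assume "0 < \<nu>" and \<alpha>: "\<alpha> = (\<lambda>t. C\<alpha> / ((real t + 3) * ln (real t + 3) powr \<nu>))"
    and T: "T = (\<lambda>m. C\<alpha> / (real m + 3))"
  have "1 \<le> ln (real t + 3) powr \<nu>"
    using one_le_ln_of_ge_3[of "real t + 3"] \<open>0 < \<nu>\<close> by (intro ge_one_powr_ge_zero) auto
  then have "(real m + 3) * 1 \<le> (real t + 3) * ln (real t + 3) powr \<nu>"
    using \<open>m \<le> t\<close> by (intro mult_mono) auto
  then show ?thesis using \<alpha> T C\<alpha> by (auto intro: divide_left_mono)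
qed

lemma lr_setup_ge_inverse_x_ln_x:
  assumes lr: "lr_setup C\<alpha> \<alpha> T" and C\<alpha>: "0 < C\<alpha>"
  shows "C\<alpha> / ((real t + 3) * ln (real t + 3)) \<le> \<alpha> t"
  using lr unfolding lr_setup_def
proof (elim disjE exE conjE)
  have ln: "1 \<le> ln (real t + 3)" by (rule one_le_ln_of_ge_3) simp
  {
    assume \<alpha>: "\<alpha> = (\<lambda>t. C\<alpha> / (real t + 3))"
    have "C\<alpha> / ((real t + 3) * ln (real t + 3)) \<le> C\<alpha> / ((real t + 3) * 1)"
      using ln C\<alpha> by (intro divide_left_mono mult_left_mono) auto
    then show ?thesis using \<alpha> by simp
  next
    fix \<nu> :: real assume "\<nu> < 1" and \<alpha>: "\<alpha> = (\<lambda>t. C\<alpha> / (real t + 3) powr \<nu>)"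
    have "(real t + 3) powr \<nu> \<le> (real t + 3) powr 1" using \<open>\<nu> < 1\<close> by (intro powr_mono) auto
    also have "\<dots> \<le> (real t + 3) * ln (real t + 3)" using ln by simp
    finally show ?thesis using \<alpha> C\<alpha> by (auto intro: divide_left_mono)
  next
    fix \<nu> :: real assume \<nu>: "0 < \<nu>" "\<nu> < 1"
      and \<alpha>: "\<alpha> = (\<lambda>t. C\<alpha> / ((real t + 3) * ln (real t + 3) powr \<nu>))"
    have "ln (real t + 3) powr \<nu> \<le> ln (real t + 3) powr 1" using ln \<nu> by (intro powr_mono) auto
    moreover have "0 < ln (real t + 3) powr \<nu>" using ln by simp
    ultimately show ?thesis using \<alpha> C\<alpha> ln by (auto intro!: divide_left_mono mult_left_mono)
  }
qed

lemma ln_ln_increment_le: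
  fixes x :: real assumes x: "3 \<le> x"
  shows "ln (ln (x + 1)) - ln (ln x) \<le> 1 / (x * ln x)"
proof -
  have ln: "1 \<le> ln x" "1 \<le> ln (x + 1)" using one_le_ln_of_ge_3 x by auto
  have "ln (x + 1) - ln x = ln ((x + 1) / x)" using x by (simp add: ln_div)
  also have "\<dots> \<le> (x + 1) / x - 1" using x by (intro ln_le_minus_one) auto
  finally have "ln (x + 1) - ln x \<le> 1 / x" using x by (simp add: field_simps)
  have "ln (ln (x + 1)) - ln (ln x) = ln (ln (x + 1) / ln x)" using ln by (simp add: ln_div)
  also have "\<dots> \<le> ln (x + 1) / ln x - 1" using ln by (intro ln_le_minus_one) auto
  also have "\<dots> = (ln (x + 1) - ln x) / ln x" using ln by (simp add: field_simps)
  also have "\<dots> \<le> (1 / x) / ln x"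
    using \<open>ln (x + 1) - ln x \<le> 1 / x\<close> ln by (intro divide_right_mono) auto
  finally show ?thesis by simp
qed

lemma sum_unbounded_of_ge_inverse_x_ln_x:
  assumes c0: "0 < c0" and \<alpha>: "\<And>t. c0 / ((real t + 3) * ln (real t + 3)) \<le> \<alpha> t"
  shows "\<exists>k. c \<le> (\<Sum>t\<in>{s..<k}. \<alpha> t)"
proof -
  define g where "g t = ln (ln (real t + 3))" for t
  have telescope: "c0 * (g k - g s) \<le> (\<Sum>t\<in>{s..<k}. \<alpha> t)" if "s \<le> k" for k
  proof -
    have "c0 * (g k - g s) = (\<Sum>t\<in>{s..<k}. c0 * (g (Suc t) - g t))"
      by (simp only: sum_Suc_diff'[OF that] flip: sum_distrib_left)
    also have "\<dots> \<le> (\<Sum>t\<in>{s..<k}. \<alpha> t)"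
    proof (rule sum_mono)
      fix t
      have "g (Suc t) - g t \<le> 1 / ((real t + 3) * ln (real t + 3))"
        using ln_ln_increment_le[of "real t + 3"] by (simp add: g_def add.commute add.left_commute)
      then show "c0 * (g (Suc t) - g t) \<le> \<alpha> t"
        using mult_left_mono[of _ _ c0] c0 \<alpha>[of t] by fastforce
    qed
    finally show ?thesis .
  qed
  define y where "y = g s + \<bar>c\<bar> / c0"
  define k where "k = max s (nat \<lceil>exp (exp y)\<rceil>)"
  have "exp (exp y) \<le> real k + 3" unfolding k_def by linarith
  then have "exp y \<le> ln (real k + 3)" using ln_ge_iff[of "real k + 3" "exp y"] by simp
  then have "y \<le> g k" using ln_ge_iff[of "ln (real k + 3)" y] by (simp add: g_def)
  then have "\<bar>c\<bar> \<le> c0 * (g k - g s)" using c0 by (simp add: y_def field_simps)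
  then show ?thesis using telescope[of k] by (intro exI[of _ k]) (auto simp: k_def)
qed

lemma anchor_Suc_covers:
  assumes "\<And>c. \<exists>k. c \<le> (\<Sum>t\<in>{anchor \<alpha> T m..<k}. \<alpha> t)"
  shows "T m \<le> (\<Sum>t\<in>{anchor \<alpha> T m..<anchor \<alpha> T (Suc m)}. \<alpha> t)"
  using LeastI_ex[OF assms] by simp

lemma anchor_Suc_minimal:
  "k < anchor \<alpha> T (Suc m) \<Longrightarrow> (\<Sum>t\<in>{anchor \<alpha> T m..<k}. \<alpha> t) < T m"
  using not_less_Least by fastforce

lemma anchor_less_Suc:
  assumes "\<And>c. \<exists>k. c \<le> (\<Sum>t\<in>{anchor \<alpha> T m..<k}. \<alpha> t)" and "0 < T m"
  shows "anchor \<alpha> T m < anchor \<alpha> T (Suc m)"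
  using anchor_Suc_covers[of \<alpha> T m] assms by (cases "anchor \<alpha> T m < anchor \<alpha> T (Suc m)") auto

lemma anchor_ge:
  assumes "\<And>s c. \<exists>k. c \<le> (\<Sum>t\<in>{s..<k}. \<alpha> t)" and "\<And>m. 0 < T m"
  shows "m \<le> anchor \<alpha> T m"
proof (induction m)
  case (Suc m)
  then show ?case using anchor_less_Suc[of \<alpha> T m] assms by fastforce
qed simp

lemma anchor_block_sum_le:
  assumes div: "\<And>s c. \<exists>k. c \<le> (\<Sum>t\<in>{s..<k}. \<alpha> t)" and T_pos: "\<And>m. 0 < T m"
    and \<alpha>_le: "\<And>m t. m \<le> t \<Longrightarrow> \<alpha> t \<le> T m"
  shows "(\<Sum>t\<in>{anchor \<alpha> T m..<anchor \<alpha> T (Suc m)}. \<alpha> t) \<le> 2 * T m"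
proof -
  define k where "k = anchor \<alpha> T (Suc m) - 1"
  have "anchor \<alpha> T m < anchor \<alpha> T (Suc m)" by (rule anchor_less_Suc) (use div T_pos in auto)
  then have k: "anchor \<alpha> T m \<le> k" "anchor \<alpha> T (Suc m) = Suc k" by (auto simp: k_def)
  have "(\<Sum>t\<in>{anchor \<alpha> T m..<anchor \<alpha> T (Suc m)}. \<alpha> t) = (\<Sum>t\<in>{anchor \<alpha> T m..<k}. \<alpha> t) + \<alpha> k"
    using k by simp
  also have "\<dots> \<le> T m + T m"
  proof (rule add_mono)
    show "(\<Sum>t\<in>{anchor \<alpha> T m..<k}. \<alpha> t) \<le> T m" using anchor_Suc_minimal[of k \<alpha> T m] k by simp
    have "m \<le> anchor \<alpha> T m" by (rule anchor_ge[OF div T_pos])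
    then show "\<alpha> k \<le> T m" using k by (intro \<alpha>_le) simp
  qed
  finally show ?thesis by simp
qed

lemma lr_setup_pos:
  assumes "lr_setup C\<alpha> \<alpha> T" "0 < C\<alpha>"
  shows "0 < \<alpha> t"
proof -
  have "0 < C\<alpha> / ((real t + 3) * ln (real t + 3))"
    using one_le_ln_of_ge_3[of "real t + 3"] assms(2) by simp
  then show ?thesis using lr_setup_ge_inverse_x_ln_x[OF assms] by (rule less_le_trans)
qed

lemma lr_setup_T_pos:
  assumes "lr_setup C\<alpha> \<alpha> T" "0 < C\<alpha>"
  shows "0 < T m"
  using lr_setup_pos[OF assms, of m] lr_setup_le_horizon[OF assms, of m m] by simp

lemma lr_setup_anchor_block_sum_le:
  assumes lr: "lr_setup C\<alpha> \<alpha> T" and C\<alpha>: "0 < C\<alpha>"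
  shows "(\<Sum>t\<in>{anchor \<alpha> T m..<anchor \<alpha> T (Suc m)}. \<alpha> t) \<le> 2 * T m"
proof (rule anchor_block_sum_le)
  show "\<exists>k. c \<le> (\<Sum>t\<in>{s..<k}. \<alpha> t)" for s c
    by (rule sum_unbounded_of_ge_inverse_x_ln_x[OF C\<alpha> lr_setup_ge_inverse_x_ln_x[OF lr C\<alpha>]])
qed (rule lr_setup_T_pos[OF lr C\<alpha>], rule lr_setup_le_horizon[OF lr C\<alpha>])

section \<open>Measurability and boundedness of the iterates\<close>

lemma borel_measurable_vec_lambda:
  fixes c :: "'d::finite \<Rightarrow> 'a \<Rightarrow> real"
  assumes "\<And>i. c i \<in> borel_measurable M"
  shows "(\<lambda>x. \<chi> i. c i x) \<in> borel_measurable M"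
proof -
  have "(\<lambda>x. \<chi> i. c i x) = (\<lambda>x. \<Sum>i\<in>UNIV. c i x *\<^sub>R axis i 1)"
    by (rule ext, subst vec_eq_iff) (simp add: sum_component axis_def if_distrib cong: if_cong)
  also have "\<dots> \<in> borel_measurable M"
    by (intro borel_measurable_sum borel_measurable_scaleR assms measurable_const) simp
  finally show ?thesis .
qed

definition grid_round :: "nat \<Rightarrow> real^'d \<Rightarrow> real^'d" where
  "grid_round n v = (\<chi> i. real_of_int \<lfloor>v $ i * Suc n\<rfloor> / Suc n)"

lemma countable_range_grid_round: "countable (range (grid_round n :: real^'d \<Rightarrow> real^'d))"
proof (rule countable_subset)
  show "range (grid_round n :: real^'d \<Rightarrow> real^'d) \<subseteq> range (\<lambda>k. \<chi> i. real_of_int (k i) / Suc n)"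
  proof (rule image_subsetI)
    fix v :: "real^'d"
    show "grid_round n v \<in> range (\<lambda>k. \<chi> i. real_of_int (k i) / Suc n)"
      unfolding grid_round_def by (rule range_eqI[where x="\<lambda>i. \<lfloor>v $ i * Suc n\<rfloor>"]) simp
  qed
qed (intro countable_image countableI_type)

lemma borel_measurable_grid_round: "grid_round n \<in> borel_measurable borel"
  unfolding grid_round_def by (intro borel_measurable_vec_lambda) measurable

lemma norm_grid_round_diff_le: "norm (grid_round n v - v) \<le> CARD('d) / Suc n"
  for v :: "real^'d"
proof -
  let ?r = "real (Suc n)"
  have "norm (grid_round n v - v) \<le> (\<Sum>i\<in>UNIV. \<bar>(grid_round n v - v) $ i\<bar>)" by (rule norm_le_l1_cart)
  also have "\<dots> \<le> (\<Sum>i\<in>(UNIV::'d set). 1 / ?r)"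
  proof (rule sum_mono)
    fix i
    have "(grid_round n v - v) $ i = (real_of_int \<lfloor>v $ i * ?r\<rfloor> - v $ i * ?r) / ?r"
      unfolding grid_round_def by (simp add: field_simps)
    moreover have "\<bar>real_of_int \<lfloor>v $ i * ?r\<rfloor> - v $ i * ?r\<bar> \<le> 1" by linarith
    ultimately show "\<bar>(grid_round n v - v) $ i\<bar> \<le> 1 / ?r"
      unfolding abs_divide by (simp add: divide_right_mono)
  qed
  finally show ?thesis by simp
qed

lemma grid_round_tendsto: "(\<lambda>n. grid_round n v) \<longlonglongrightarrow> v"
  for v :: "real^'d"
proof (rule LIM_zero_cancel, rule Lim_null_comparison[OF always_eventually])
  show "\<forall>n. norm (grid_round n v - v) \<le> CARD('d) / Suc n" using norm_grid_round_diff_le by blast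
  show "(\<lambda>n. real CARD('d) / Suc n) \<longlonglongrightarrow> 0" by (rule LIMSEQ_Suc[OF lim_const_over_n])
qed

lemma borel_measurable_Caratheodory:
  fixes H :: "real^'d \<Rightarrow> 'y \<Rightarrow> 'b::metric_space"
  assumes H_meas: "\<And>w. H w \<in> borel_measurable S"
    and H_cont: "\<And>y. y \<in> space S \<Longrightarrow> continuous_on UNIV (\<lambda>w. H w y)"
    and f: "f \<in> borel_measurable M" and g: "g \<in> M \<rightarrow>\<^sub>M S"
  shows "(\<lambda>x. H (f x) (g x)) \<in> borel_measurable M"
proof (rule borel_measurable_LIMSEQ_metric)
  fix n
  have f_n: "(\<lambda>x. grid_round n (f x)) \<in> borel_measurable M"
    by (rule measurable_compose[OF f borel_measurable_grid_round])
  have "(\<lambda>x. grid_round n (f x)) \<in> M \<rightarrow>\<^sub>M count_space (range (grid_round n))"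
    unfolding measurable_count_space_eq_countable[OF countable_range_grid_round]
    using measurable_sets[OF f_n borel_closed[OF closed_singleton]] by auto
  then show "(\<lambda>x. H (grid_round n (f x)) (g x)) \<in> borel_measurable M"
    by (rule measurable_compose_countable'[where f="\<lambda>w x. H w (g x)",
          OF measurable_compose[OF g H_meas] _ countable_range_grid_round])
next
  fix x assume "x \<in> space M"
  then have "continuous_on UNIV (\<lambda>w. H w (g x))" using H_cont measurable_space[OF g] by blast
  then show "(\<lambda>n. H (grid_round n (f x)) (g x)) \<longlonglongrightarrow> H (f x) (g x)"
    by (intro isCont_tendsto_compose[OF _ grid_round_tendsto])
      (simp add: continuous_on_eq_continuous_at)
qed

lemma
  assumes Y: "\<And>t. Y t \<in> M \<rightarrow>\<^sub>M S"
  shows subalgebra_filt: "subalgebra M (filt M S Y n)"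
    and measurable_filt: "s \<in> {1..n} \<Longrightarrow> Y s \<in> filt M S Y n \<rightarrow>\<^sub>M S"
proof -
  let ?G = "{Y s -` A \<inter> space M | s A. s \<in> {1..n} \<and> A \<in> sets S}"
  have G: "?G \<subseteq> Pow (space M)" by auto
  have space: "space (filt M S Y n) = space M"
    and sets: "sets (filt M S Y n) = sigma_sets (space M) ?G"
    unfolding filt_def gen_sigma_def using G by simp_all
  have "?G \<subseteq> sets M" using measurable_sets[OF Y] by auto
  then show "subalgebra M (filt M S Y n)"
    unfolding subalgebra_def space sets by (simp add: sets.sigma_sets_subset)
  assume s: "s \<in> {1..n}"
  show "Y s \<in> filt M S Y n \<rightarrow>\<^sub>M S"
  proof (rule measurableI)
    show "Y s x \<in> space S" if "x \<in> space (filt M S Y n)" for x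
      using measurable_space[OF Y] that unfolding space by blast
    show "Y s -` A \<inter> space (filt M S Y n) \<in> sets (filt M S Y n)" if "A \<in> sets S" for A
      unfolding space sets using s that by (intro sigma_sets.Basic) blast
  qed
qed

lemma iterate_measurable_filt:
  assumes Y: "\<And>t. Y t \<in> M \<rightarrow>\<^sub>M S" and H_meas: "\<And>w. H w \<in> borel_measurable S"
    and H_cont: "\<And>y. y \<in> space S \<Longrightarrow> continuous_on UNIV (\<lambda>w. H w y)"
  shows "t \<le> n \<Longrightarrow> iterate H \<alpha> Y w0 t \<in> borel_measurable (filt M S Y n)"
proof (induction t)
  case 0
  have "iterate H \<alpha> Y w0 0 = (\<lambda>_. w0)" by auto
  then show ?case by simp
next
  case (Suc t)
  then have "iterate H \<alpha> Y w0 t \<in> borel_measurable (filt M S Y n)"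
    and "Y (Suc t) \<in> filt M S Y n \<rightarrow>\<^sub>M S" by (auto intro: measurable_filt[OF Y])
  then have "(\<lambda>\<omega>. H (iterate H \<alpha> Y w0 t \<omega>) (Y (Suc t) \<omega>)) \<in> borel_measurable (filt M S Y n)"
    using borel_measurable_Caratheodory[where H=H, OF H_meas H_cont] by blast
  moreover have "iterate H \<alpha> Y w0 (Suc t) = (\<lambda>\<omega>. iterate H \<alpha> Y w0 t \<omega>
      + \<alpha> t *\<^sub>R (H (iterate H \<alpha> Y w0 t \<omega>) (Y (Suc t) \<omega>) - iterate H \<alpha> Y w0 t \<omega>))" by auto
  ultimately show ?case using \<open>iterate H \<alpha> Y w0 t \<in> borel_measurable (filt M S Y n)\<close> by simp
qed

lemma iterate_bounded:
  fixes H :: "real^'d \<Rightarrow> 'y \<Rightarrow> real^'d"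
  assumes N: "is_norm N" and Y: "\<And>t \<omega>. \<omega> \<in> space M \<Longrightarrow> Y t \<omega> \<in> space S"
    and growth: "\<And>w y. y \<in> space S \<Longrightarrow> N (H w y - w) \<le> a * N w + b" and "0 \<le> a"
  shows "\<exists>B. \<forall>\<omega>\<in>space M. N (iterate H \<alpha> Y w0 t \<omega>) \<le> B"
proof (induction t)
  case (Suc t)
  then obtain B where B: "\<And>\<omega>. \<omega> \<in> space M \<Longrightarrow> N (iterate H \<alpha> Y w0 t \<omega>) \<le> B" by blast
  have "N (iterate H \<alpha> Y w0 (Suc t) \<omega>) \<le> B + \<bar>\<alpha> t\<bar> * (a * B + b)" if \<omega>: "\<omega> \<in> space M" for \<omega>
  proof -
    let ?w = "iterate H \<alpha> Y w0 t \<omega>"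
    have "N (iterate H \<alpha> Y w0 (Suc t) \<omega>) \<le> N ?w + \<bar>\<alpha> t\<bar> * N (H ?w (Y (Suc t) \<omega>) - ?w)"
      using is_norm_triangle[OF N] by (simp flip: is_norm_scaleR[OF N])
    also have "\<dots> \<le> B + \<bar>\<alpha> t\<bar> * (a * B + b)"
    proof (intro add_mono mult_left_mono order_refl abs_ge_zero)
      show "N ?w \<le> B" by (rule B[OF \<omega>])
      have "N (H ?w (Y (Suc t) \<omega>) - ?w) \<le> a * N ?w + b" by (rule growth[OF Y[OF \<omega>]])
      also have "\<dots> \<le> a * B + b" using B[OF \<omega>] \<open>0 \<le> a\<close> by (simp add: mult_left_mono)
      finally show "N (H ?w (Y (Suc t) \<omega>) - ?w) \<le> a * B + b" .
    qed
    finally show ?thesis .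
  qed
  then show ?case by blast
qed (intro exI[of _ "N w0"], simp)

lemma borel_measurable_is_norm: "is_norm N \<Longrightarrow> N \<in> borel_measurable borel"
  by (rule borel_measurable_continuous_onI[OF is_norm_continuous_on])

lemma borel_measurable_affine_norm_iterate_filt:
  assumes Y: "\<And>t. Y t \<in> M \<rightarrow>\<^sub>M S" and N: "is_norm N" and H_meas: "\<And>w. H w \<in> borel_measurable S"
    and H_cont: "\<And>y. y \<in> space S \<Longrightarrow> continuous_on UNIV (\<lambda>w. H w y)" and "t \<le> n"
  shows "(\<lambda>\<omega>. a * N (iterate H \<alpha> Y w0 t \<omega>) + b) \<in> borel_measurable (filt M S Y n)"
proof -
  have "iterate H \<alpha> Y w0 t \<in> borel_measurable (filt M S Y n)"
    by (rule iterate_measurable_filt[where H=H, OF Y H_meas H_cont \<open>t \<le> n\<close>])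
  then have "(\<lambda>\<omega>. N (iterate H \<alpha> Y w0 t \<omega>)) \<in> borel_measurable (filt M S Y n)"
    by (rule measurable_compose[OF _ borel_measurable_is_norm[OF N]])
  then show ?thesis by (intro borel_measurable_add borel_measurable_times measurable_const) simp_all
qed

lemma integrable_affine_norm_iterate:
  fixes H :: "real^'d \<Rightarrow> 'y \<Rightarrow> real^'d"
  assumes M: "prob_space M" and Y: "\<And>t. Y t \<in> M \<rightarrow>\<^sub>M S" and N: "is_norm N"
    and H_meas: "\<And>w. H w \<in> borel_measurable S"
    and H_cont: "\<And>y. y \<in> space S \<Longrightarrow> continuous_on UNIV (\<lambda>w. H w y)"
    and growth: "\<And>w y. y \<in> space S \<Longrightarrow> N (H w y - w) \<le> a * N w + b" and "0 \<le> a"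
  shows "integrable M (\<lambda>\<omega>. a * N (iterate H \<alpha> Y w0 t \<omega>) + b)"
proof -
  interpret prob_space M by (rule M)
  have Y_space: "\<And>t \<omega>. \<omega> \<in> space M \<Longrightarrow> Y t \<omega> \<in> space S" by (rule measurable_space[OF Y])
  have "\<exists>B. \<forall>\<omega>\<in>space M. N (iterate H \<alpha> Y w0 t \<omega>) \<le> B"
    by (rule iterate_bounded[where H=H, OF N Y_space growth \<open>0 \<le> a\<close>])
  then obtain B where B: "\<And>\<omega>. \<omega> \<in> space M \<Longrightarrow> N (iterate H \<alpha> Y w0 t \<omega>) \<le> B" by blast
  show ?thesis
  proof (rule integrable_const_bound[where B="a * B + \<bar>b\<bar>"])
    have "\<bar>a * N (iterate H \<alpha> Y w0 t \<omega>) + b\<bar> \<le> a * B + \<bar>b\<bar>" if "\<omega> \<in> space M" for \<omega>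
    proof -
      have "0 \<le> a * N (iterate H \<alpha> Y w0 t \<omega>)" "a * N (iterate H \<alpha> Y w0 t \<omega>) \<le> a * B"
        using B[OF that] \<open>0 \<le> a\<close> by (simp_all add: is_norm_nonneg[OF N] mult_left_mono)
      then show ?thesis by linarith
    qed
    then show "AE \<omega> in M. norm (a * N (iterate H \<alpha> Y w0 t \<omega>) + b) \<le> a * B + \<bar>b\<bar>"
      by (intro AE_I2) simp
    show "(\<lambda>\<omega>. a * N (iterate H \<alpha> Y w0 t \<omega>) + b) \<in> borel_measurable M"
      by (rule measurable_from_subalg[OF subalgebra_filt[OF Y]
            borel_measurable_affine_norm_iterate_filt[where H=H, OF Y N H_meas H_cont order_refl]])
  qed
qed

section \<open>Conditional expectations and the noise term\<close>

context sigma_finite_subalgebra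
begin

lemma real_cond_exp_abs_le:
  assumes f: "integrable M f" and g: "integrable M g" "g \<in> borel_measurable F"
    and fg: "AE x in M. \<bar>f x\<bar> \<le> g x"
  shows "AE x in M. \<bar>real_cond_exp M F f x\<bar> \<le> g x"
proof -
  have "AE x in M. real_cond_exp M F f x \<le> real_cond_exp M F g x"
    using fg by (intro real_cond_exp_mono f g) auto
  moreover have "AE x in M. real_cond_exp M F (\<lambda>x. - g x) x \<le> real_cond_exp M F f x"
    using fg by (intro real_cond_exp_mono f integrable_minus g) auto
  moreover have "AE x in M. real_cond_exp M F g x = g x"
    and "AE x in M. real_cond_exp M F (\<lambda>x. - g x) x = - g x"
    using g by (auto intro!: real_cond_exp_F_meas integrable_minus)
  ultimately show ?thesis by eventually_elim auto
qed

lemma cond_exp_vec_norm_le: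
  fixes N :: "real^'d \<Rightarrow> real" and X :: "'a \<Rightarrow> real^'d"
  assumes K: "0 \<le> K" "\<And>x. N x \<le> K * norm x" and c: "0 < c" "\<And>x. c * norm x \<le> N x"
    and X: "X \<in> borel_measurable M" and Z: "integrable M Z" "Z \<in> borel_measurable F"
    and XZ: "\<And>\<omega>. \<omega> \<in> space M \<Longrightarrow> N (X \<omega>) \<le> Z \<omega>"
  shows "AE \<omega> in M. N (cond_exp_vec M F X \<omega>) \<le> K * CARD('d) / c * Z \<omega>"
proof -
  have X_Z: "\<bar>X \<omega> $ i\<bar> \<le> Z \<omega> / c" if "\<omega> \<in> space M" for \<omega> i
  proof -
    have "c * norm (X \<omega>) \<le> Z \<omega>" using c(2) XZ[OF that] order_trans by blast
    then have "norm (X \<omega>) \<le> Z \<omega> / c" using c(1) by (simp add: pos_le_divide_eq mult.commute)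
    then show ?thesis using component_le_norm_cart[of "X \<omega>" i] by linarith
  qed
  have Z_c: "integrable M (\<lambda>\<omega>. Z \<omega> / c)" "(\<lambda>\<omega>. Z \<omega> / c) \<in> borel_measurable F"
    using Z by auto
  have X_i: "integrable M (\<lambda>\<omega>. X \<omega> $ i)" for i
  proof (rule Bochner_Integration.integrable_bound[OF Z_c(1)])
    show "(\<lambda>\<omega>. X \<omega> $ i) \<in> borel_measurable M"
      by (rule measurable_compose[OF X borel_measurable_nth])
    show "AE \<omega> in M. norm (X \<omega> $ i) \<le> norm (Z \<omega> / c)"
      by (intro AE_I2, unfold real_norm_def, rule order_trans[OF X_Z abs_ge_self])
  qed
  have "AE \<omega> in M. \<forall>i. \<bar>cond_exp_vec M F X \<omega> $ i\<bar> \<le> Z \<omega> / c"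
    unfolding AE_all_countable cond_exp_vec_def
    using X_Z by (auto intro!: real_cond_exp_abs_le[OF X_i Z_c])
  then show ?thesis
  proof eventually_elim
    case (elim \<omega>)
    have "N (cond_exp_vec M F X \<omega>) \<le> K * (\<Sum>i\<in>UNIV. \<bar>cond_exp_vec M F X \<omega> $ i\<bar>)"
      using K norm_le_l1_cart order_trans mult_left_mono by blast
    also have "\<dots> \<le> K * (\<Sum>i\<in>(UNIV::'d set). Z \<omega> / c)"
      using elim K(1) by (intro mult_left_mono sum_mono) auto
    finally show ?case by simp
  qed
qed

lemma norm_sum_centered_cond_exp_le:
  fixes N :: "real^'d \<Rightarrow> real" and X :: "'i \<Rightarrow> 'a \<Rightarrow> real^'d"
  assumes N: "is_norm N" and K: "0 \<le> K" "\<And>x. N x \<le> K * norm x" and c: "0 < c" "\<And>x. c * norm x \<le> N x"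
    and A: "finite A" and \<alpha>: "\<And>t. 0 \<le> \<alpha> t"
    and X: "\<And>t. X t \<in> borel_measurable M" and Z: "integrable M Z" "Z \<in> borel_measurable F"
    and XZ: "\<And>t \<omega>. \<omega> \<in> space M \<Longrightarrow> N (X t \<omega>) \<le> Z \<omega>"
  shows "AE \<omega> in M. N (\<Sum>t\<in>A. \<alpha> t *\<^sub>R (X t \<omega> - cond_exp_vec M F (X t) \<omega>))
    \<le> (1 + K * CARD('d) / c) * (\<Sum>t\<in>A. \<alpha> t) * Z \<omega>"
proof -
  have "AE \<omega> in M. \<forall>t\<in>A. N (cond_exp_vec M F (X t) \<omega>) \<le> K * CARD('d) / c * Z \<omega>"
    by (intro AE_finite_allI[OF A] cond_exp_vec_norm_le[OF K c X Z XZ])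
  with AE_space show ?thesis
  proof eventually_elim
    case (elim \<omega>)
    have "N (\<Sum>t\<in>A. \<alpha> t *\<^sub>R (X t \<omega> - cond_exp_vec M F (X t) \<omega>))
        \<le> (\<Sum>t\<in>A. N (\<alpha> t *\<^sub>R (X t \<omega> - cond_exp_vec M F (X t) \<omega>)))"
      by (rule is_norm_sum_le[OF N])
    also have "\<dots> \<le> (\<Sum>t\<in>A. \<alpha> t * (N (X t \<omega>) + N (cond_exp_vec M F (X t) \<omega>)))"
      using \<alpha>
      by (intro sum_mono) (simp add: is_norm_scaleR[OF N] is_norm_diff_le[OF N] mult_left_mono)
    also have "\<dots> \<le> (\<Sum>t\<in>A. \<alpha> t * ((1 + K * CARD('d) / c) * Z \<omega>))"
      using elim XZ \<alpha> by (intro sum_mono mult_left_mono) (auto simp: distrib_right intro: add_mono)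
    also have "\<dots> = (\<Sum>t\<in>A. \<alpha> t) * ((1 + K * CARD('d) / c) * Z \<omega>)"
      by (rule sum_distrib_right[symmetric])
    finally show ?case by (simp only: mult_ac)
  qed
qed

end

lemma z2_norm_le:
  fixes H :: "real^'d \<Rightarrow> 'y \<Rightarrow> real^'d" and N :: "real^'d \<Rightarrow> real"
  assumes M: "prob_space M" and Y: "\<And>t. Y t \<in> M \<rightarrow>\<^sub>M S" and N: "is_norm N"
    and H_meas: "\<And>w. H w \<in> borel_measurable S"
    and H_cont: "\<And>y. y \<in> space S \<Longrightarrow> continuous_on UNIV (\<lambda>w. H w y)"
    and growth: "\<And>w y. y \<in> space S \<Longrightarrow> N (H w y - w) \<le> a * N w + b" and "0 \<le> a"
    and \<alpha>: "\<And>t. 0 \<le> \<alpha> t"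
  obtains C where "0 \<le> C"
    "\<And>m. AE \<omega> in M. N (z2 M S H \<alpha> T Y w0 m \<omega>)
       \<le> C * (\<Sum>t\<in>{anchor \<alpha> T m..<anchor \<alpha> T (Suc m)}. \<alpha> t)
          * (a * N (iterate H \<alpha> Y w0 (anchor \<alpha> T m) \<omega>) + b)"
proof -
  interpret prob_space M by (rule M)
  obtain K where K: "0 \<le> K" "\<And>x. N x \<le> K * norm x" using is_norm_le_norm[OF N] by blast
  obtain c where c: "0 < c" "\<And>x. c * norm x \<le> N x" using is_norm_ge_norm[OF N] by blast
  show thesis
  proof
    show "0 \<le> 1 + K * CARD('d) / c" using K c by simp
    fix m
    define tm where "tm = anchor \<alpha> T m"
    define F where "F = filt M S Y tm"
    define wm where "wm = iterate H \<alpha> Y w0 tm"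
    define X where "X = (\<lambda>t \<omega>. H (wm \<omega>) (Y (Suc t) \<omega>) - wm \<omega>)"
    define Z where "Z = (\<lambda>\<omega>. a * N (wm \<omega>) + b)"
    have F: "subalgebra M F" unfolding F_def by (rule subalgebra_filt[OF Y])
    interpret finite_measure_subalgebra M F
      by (intro finite_measure_subalgebra.intro finite_measure_axioms
          finite_measure_subalgebra_axioms.intro F)
    have wm: "wm \<in> borel_measurable M"
      unfolding wm_def F_def
      by (rule measurable_from_subalg[OF F[unfolded F_def]
            iterate_measurable_filt[where H=H, OF Y H_meas H_cont order_refl]])
    have "AE \<omega> in M. N (\<Sum>t\<in>{tm..<anchor \<alpha> T (Suc m)}. \<alpha> t *\<^sub>R (X t \<omega> - cond_exp_vec M F (X t) \<omega>))
      \<le> (1 + K * CARD('d) / c) * (\<Sum>t\<in>{tm..<anchor \<alpha> T (Suc m)}. \<alpha> t) * Z \<omega>"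
    proof (rule norm_sum_centered_cond_exp_le[OF N K c finite_atLeastLessThan \<alpha>])
      show "X t \<in> borel_measurable M" for t
        unfolding X_def
        by (intro borel_measurable_diff wm borel_measurable_Caratheodory[where H=H, OF H_meas H_cont wm Y])
      show "integrable M Z"
        unfolding Z_def wm_def
        by (rule integrable_affine_norm_iterate[where H=H, OF M Y N H_meas H_cont growth \<open>0 \<le> a\<close>])
      show "Z \<in> borel_measurable F"
        unfolding Z_def wm_def F_def
        by (rule borel_measurable_affine_norm_iterate_filt[where H=H, OF Y N H_meas H_cont order_refl])
      show "N (X t \<omega>) \<le> Z \<omega>" if "\<omega> \<in> space M" for t \<omega>
        unfolding X_def Z_def by (rule growth[OF measurable_space[OF Y that]])
    qed
    moreover have "z2 M S H \<alpha> T Y w0 m \<omega>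
        = (\<Sum>t\<in>{tm..<anchor \<alpha> T (Suc m)}. \<alpha> t *\<^sub>R (X t \<omega> - cond_exp_vec M F (X t) \<omega>))" for \<omega>
      unfolding z2_def Let_def X_def F_def wm_def tm_def by simp
    ultimately show "AE \<omega> in M. N (z2 M S H \<alpha> T Y w0 m \<omega>)
       \<le> (1 + K * CARD('d) / c) * (\<Sum>t\<in>{anchor \<alpha> T m..<anchor \<alpha> T (Suc m)}. \<alpha> t)
          * (a * N (iterate H \<alpha> Y w0 (anchor \<alpha> T m) \<omega>) + b)"
      unfolding Z_def wm_def tm_def by simp
  qed
qed

theorem lemma6:
  fixes M :: "'a measure" and S :: "'y measure" and Y :: "nat \<Rightarrow> 'a \<Rightarrow> 'y"
    and P :: "'y \<Rightarrow> 'y measure" and dY :: "'y measure"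
    and C_A \<rho> \<kappa> L_h C\<alpha> \<xi> :: real
    and H :: "real^'d \<Rightarrow> 'y \<Rightarrow> real^'d" and N Ns :: "real^'d \<Rightarrow> real"
    and w0 wstar :: "real^'d" and \<alpha> T :: "nat \<Rightarrow> real"
  assumes markov: "markov_chain M S Y P"
    and stat: "stationary S P dY"
    and stat_unique: "\<And>\<mu>. stationary S P \<mu> \<Longrightarrow> \<mu> = dY"
    and rho: "0 \<le> \<rho>" "\<rho> < 1"
    and mixing: "\<And>y n f. y \<in> space S \<Longrightarrow> f \<in> borel_measurable S \<Longrightarrow> (\<And>x. \<bar>f x\<bar> \<le> 1) \<Longrightarrow>
        \<bar>(\<integral>x. f x \<partial>(kernel_pow S P n y)) - (\<integral>x. f x \<partial>dY)\<bar> \<le> C_A * \<rho> ^ n"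
    and H_meas: "\<And>w. H w \<in> borel_measurable S"
    and norm: "is_norm N"
    and kappa: "0 \<le> \<kappa>" "\<kappa> < 1"
    and contr: "\<And>w w'. N ((\<integral>y. H w y \<partial>dY) - (\<integral>y. H w' y \<partial>dY)) \<le> \<kappa> * N (w - w')"
    and fixpt: "(\<integral>y. H wstar y \<partial>dY) = wstar"
    and lip: "\<And>w w' y. y \<in> space S \<Longrightarrow> N (H w y - H w' y) \<le> L_h * N (w - w')"
    and bdd0: "\<exists>B. \<forall>y \<in> space S. N (H 0 y) \<le> B"
    and Calpha: "C\<alpha> > 0"
    and lr: "lr_setup C\<alpha> \<alpha> T"
    and norm_s: "is_norm Ns"
    and smooth: "smooth_wrt (\<lambda>x. (1/2) * (Ns x)\<^sup>2) Ns"
    and xi: "\<xi> > 0"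
  shows "\<exists>C m0. \<forall>m \<ge> m0. AE \<omega> in M.
           moreau_norm N Ns \<xi> (z2 M S H \<alpha> T Y w0 m \<omega>)
             \<le> T m * C * (moreau_norm N Ns \<xi> (iterate H \<alpha> Y w0 (anchor \<alpha> T m) \<omega> - wstar) + 1)"
proof -
  have M: "prob_space M" and Y: "\<And>t. Y t \<in> M \<rightarrow>\<^sub>M S" using markov unfolding markov_chain_def by auto
  obtain B where B: "0 \<le> B" "\<And>w y. y \<in> space S \<Longrightarrow> N (H w y - w) \<le> (\<bar>L_h\<bar> + 1) * N w + B"
    using lipschitz_affine_growth[where H=H, OF norm lip bdd0] by blast
  have H_cont: "continuous_on UNIV (\<lambda>w. H w y)" if "y \<in> space S" for y
    by (rule is_norm_lipschitz_continuous_on[where f="\<lambda>w. H w y", OF norm lip[OF that]])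
  have \<alpha>: "0 \<le> \<alpha> t" for t by (rule less_imp_le[OF lr_setup_pos[OF lr Calpha]])
  obtain C where C: "0 \<le> C" "\<And>m. AE \<omega> in M. N (z2 M S H \<alpha> T Y w0 m \<omega>)
      \<le> C * (\<Sum>t\<in>{anchor \<alpha> T m..<anchor \<alpha> T (Suc m)}. \<alpha> t)
        * ((\<bar>L_h\<bar> + 1) * N (iterate H \<alpha> Y w0 (anchor \<alpha> T m) \<omega>) + B)"
    using z2_norm_le[where H=H and \<alpha>=\<alpha> and Y=Y and T=T, OF M Y norm H_meas H_cont B(2)
        add_nonneg_nonneg[OF abs_ge_zero zero_le_one] \<alpha>]
    by blast
  have T: "0 \<le> T m" for m by (rule less_imp_le[OF lr_setup_T_pos[OF lr Calpha]])
  obtain D where D: "\<And>w. (\<bar>L_h\<bar> + 1) * N w + B \<le> D * (moreau_norm N Ns \<xi> (w - wstar) + 1)"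
    using affine_le_moreau_norm_diff[OF norm norm_s xi, of "\<bar>L_h\<bar> + 1"] by auto
  have "AE \<omega> in M. moreau_norm N Ns \<xi> (z2 M S H \<alpha> T Y w0 m \<omega>)
      \<le> T m * (2 * C * D) * (moreau_norm N Ns \<xi> (iterate H \<alpha> Y w0 (anchor \<alpha> T m) \<omega> - wstar) + 1)" for m
    using C(2)[of m]
  proof eventually_elim
    case (elim \<omega>)
    let ?w = "iterate H \<alpha> Y w0 (anchor \<alpha> T m) \<omega>"
    have "moreau_norm N Ns \<xi> (z2 M S H \<alpha> T Y w0 m \<omega>) \<le> N (z2 M S H \<alpha> T Y w0 m \<omega>)"
      by (rule moreau_norm_le[OF norm norm_s xi])
    also have "\<dots> \<le> C * (2 * T m) * ((\<bar>L_h\<bar> + 1) * N ?w + B)"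
      using elim C(1) B(1) lr_setup_anchor_block_sum_le[OF lr Calpha, of m]
      by (intro order_trans[OF elim] mult_right_mono mult_left_mono)
        (simp_all add: is_norm_nonneg[OF norm])
    also have "\<dots> \<le> C * (2 * T m) * (D * (moreau_norm N Ns \<xi> (?w - wstar) + 1))"
      using T by (intro mult_left_mono D mult_nonneg_nonneg C(1)) simp
    finally show ?case by (simp add: ac_simps)
  qed
  then show ?thesis by blast
qed

end
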